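(* Let $\alpha$ be a countable ordinal. For all $e,k\in\mathbb N$, all tuples $\vec a$ of natural numbers and all $b\in\mathbb N$, the set $$\{\vec f\in(\mathbb N^{\mathbb N})^k : \|\langle e,\vec a,\vec f,b\rangle\|_{\Omega_{\mathbf S}}<\alpha\}$$ is a Suslin set (a subset of $(\mathbb N^{\mathbb N})^k$).
   Context: The Suslin functional: $\mathbf S(g)=0$ if $\forall f\in\mathbb N^{\mathbb N}\exists n\,g(\bar f(n))=0$, and $1$ if $\exists f\forall n\,g(\bar f(n))>0$, $\bar f(n)=\langle f(0),\dots,f(n-1)\rangle$. $\Omega_{\mathbf S}$ is the set of tuples $\langle e,\vec a,\vec f,b\rangle$ with $\{e\}(\mathbf S,\vec a,\vec f)=b$ in the sense of Kleene computability (schemes S1–S9, arguments ordered as: $\mathbf S$, integers, functions), and $\|\cdot\|_{\Omega_{\mathbf S}}$ is the ordinal rank of the (well-founded) computation tree of the tuple; for tuples not in $\Omega_{\mathbf S}$ the condition $\|\cdot\|<\alpha$ is false. Suslin sets in $X=(\mathbb N^{\mathbb N})^k$: a Suslin scheme is $s\mapsto P_s\subseteq X$ on the set $\mathrm{SEQ}$ of finite sequences of naturals, $\mathbf A(\mathbf P)=\bigcup_f\bigcap_n P_{\bar f(n)}$; $\Sigma_0$ clopen sets; $\Sigma_\beta$ ($\beta>0$) sets $\mathbf A(\mathbf P)$ with each $P_s\in\Pi_\gamma$, some $\gamma<\beta$; $\Pi_\beta$ complements; Suslin sets $=\bigcup_{\beta<\omega_1}\Sigma_\beta$. *)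

theory Defs
  imports Main "HOL-Library.Nat_Bijection"
begin

text \<open>Code of the finite sequence f(0),...,f(n-1) (the paper's bar f(n)); SEQ is coded
  by the bijection list_encode between nat lists and nat.\<close>
definition seqcode :: "(nat \<Rightarrow> nat) \<Rightarrow> nat \<Rightarrow> nat" where
  "seqcode f n = list_encode (map f [0..<n])"

definition Sfun :: "(nat \<Rightarrow> nat) \<Rightarrow> nat" where
  "Sfun g = (if (\<forall>f::nat \<Rightarrow> nat. \<exists>n. g (seqcode f n) = 0) then 0 else 1)"

text \<open>A computation tuple (e, as, fs, b) stands for  {e}(S, as, fs) = b :
  as are the integer arguments, fs the function arguments.
  Indices are codes (via list_encode) of lists beginning with the scheme number,
  the number n of integer arguments and the number k of function arguments.\<close>

type_synonym comp = "nat \<times> nat list \<times> (nat \<Rightarrow> nat) list \<times> nat"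

definition swap_list :: "nat \<Rightarrow> nat \<Rightarrow> 'a list \<Rightarrow> 'a list" where
  "swap_list i j xs = xs[i := xs ! j, j := xs ! i]"

definition step :: "(comp \<Rightarrow> bool) \<Rightarrow> comp \<Rightarrow> bool" where
  "step P x \<longleftrightarrow> (case x of (e, as, fs, b) \<Rightarrow>
     let n = length as; k = length fs in
     \<comment> \<open>S1: successor\<close>
     (e = list_encode [1, n, k] \<and> n \<ge> 1 \<and> b = Suc (as ! 0))
     \<comment> \<open>S2: constants\<close>
   \<or> (\<exists>q. e = list_encode [2, n, k, q] \<and> b = q)
     \<comment> \<open>S3: identity (first argument)\<close>
   \<or> (e = list_encode [3, n, k] \<and> n \<ge> 1 \<and> b = as ! 0)
     \<comment> \<open>S4: composition {e}(a,f) = {e1}({e2}(a,f), a, f)\<close>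
   \<or> (\<exists>e1 e2 c. e = list_encode [4, n, k, e1, e2] \<and>
        P (e2, as, fs, c) \<and> P (e1, c # as, fs, b))
     \<comment> \<open>S5: primitive recursion on the first argument\<close>
   \<or> (\<exists>e1 e2 as'. e = list_encode [5, n, k, e1, e2] \<and> as = 0 # as' \<and> P (e1, as', fs, b))
   \<or> (\<exists>e1 e2 m as' c. e = list_encode [5, n, k, e1, e2] \<and> as = Suc m # as' \<and>
        P (e, m # as', fs, c) \<and> P (e2, c # m # as', fs, b))
     \<comment> \<open>S6: permutation (swap) of integer arguments, resp. of function arguments\<close>
   \<or> (\<exists>i j e1. e = list_encode [6, n, k, 0, i, j, e1] \<and> i < n \<and> j < n \<and>
        P (e1, swap_list i j as, fs, b))
   \<or> (\<exists>i j e1. e = list_encode [6, n, k, 1, i, j, e1] \<and> i < k \<and> j < k \<and>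
        P (e1, as, swap_list i j fs, b))
     \<comment> \<open>S7: application of the first function argument to the first integer argument\<close>
   \<or> (e = list_encode [7, n, k] \<and> n \<ge> 1 \<and> k \<ge> 1 \<and> b = (fs ! 0) (as ! 0))
     \<comment> \<open>S8: application of S: {e}(a,f) = S(\<lambda>t. {e1}(t,a,f)), which must be total\<close>
   \<or> (\<exists>e1 g. e = list_encode [8, n, k, e1] \<and> (\<forall>t. P (e1, t # as, fs, g t)) \<and> b = Sfun g)
     \<comment> \<open>S9: enumeration {e}(d, a1..an', f) = {d}(a1..am, f), m \<le> n'\<close>
   \<or> (\<exists>m d as'. e = list_encode [9, n, k, m] \<and> as = d # as' \<and> m \<le> length as' \<and>
        P (d, take m as', fs, b)))"

lemma step_mono [mono]: "(\<And>y. P y \<longrightarrow> Q y) \<Longrightarrow> step P x \<longrightarrow> step Q x"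
  unfolding step_def split_beta Let_def by (intro impI) (elim disjE; meson)

text \<open>Omega_S: the least fixed point, i.e. the set of all convergent computations.\<close>
inductive omegaS :: "comp \<Rightarrow> bool" where
  "step omegaS x \<Longrightarrow> omegaS x"

text \<open>Countable ordinals are represented by well-orders on (subsets of) nat;
  the order type of the initial segment strictly below a point xi of the field of
  alpha is the ordinal |xi|_alpha. comp_rank_le alpha xi x means: x is in Omega_S and the
  ordinal rank of its computation tree (rank = sup of (rank of child + 1)) is at most
  |xi|_alpha, i.e. every immediate subcomputation has rank at most |eta|_alpha for
  some eta strictly below xi.\<close>
inductive comp_rank_le :: "nat rel \<Rightarrow> nat \<Rightarrow> comp \<Rightarrow> bool" for \<alpha> where
  "\<xi> \<in> Field \<alpha> \<Longrightarrow>
   step (\<lambda>y. \<exists>\<eta>. (\<eta>, \<xi>) \<in> \<alpha> \<and> \<eta> \<noteq> \<xi> \<and> comp_rank_le \<alpha> \<eta> y) x \<Longrightarrow>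
   comp_rank_le \<alpha> \<xi> x"

text \<open>norm_less alpha x  means  ||x||_{Omega_S} < alpha (the order type of alpha);
  false for x not in Omega_S.\<close>
definition norm_less :: "nat rel \<Rightarrow> comp \<Rightarrow> bool" where
  "norm_less \<alpha> x \<longleftrightarrow> omegaS x \<and> (\<exists>\<xi> \<in> Field \<alpha>. comp_rank_le \<alpha> \<xi> x)"

definition space :: "nat \<Rightarrow> (nat \<Rightarrow> nat) list set" where
  "space k = {fs. length fs = k}"

text \<open>Open sets of the product (Baire) topology on (N^N)^k, N discrete.\<close>
definition baire_open :: "nat \<Rightarrow> (nat \<Rightarrow> nat) list set \<Rightarrow> bool" where
  "baire_open k A \<longleftrightarrow> A \<subseteq> space k \<and>
     (\<forall>fs \<in> A. \<exists>n. \<forall>gs \<in> space k. (\<forall>i<k. \<forall>m<n. (gs ! i) m = (fs ! i) m) \<longrightarrow> gs \<in> A)"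

definition clopen :: "nat \<Rightarrow> (nat \<Rightarrow> nat) list set \<Rightarrow> bool" where
  "clopen k A \<longleftrightarrow> baire_open k A \<and> baire_open k (space k - A)"

definition suslinA :: "(nat list \<Rightarrow> 'a set) \<Rightarrow> 'a set" where
  "suslinA P = (\<Union>f. \<Inter>n. P (map f [0..<n]))"

text \<open>Sigma k beta A: A is a Sigma_beta subset of (N^N)^k, beta a countable ordinal
  (well-order on nat; beta = {} is the ordinal 0). Pi_gamma sets are the complements
  (in (N^N)^k) of Sigma_gamma sets.\<close>
inductive Sigma_set :: "nat \<Rightarrow> nat rel \<Rightarrow> (nat \<Rightarrow> nat) list set \<Rightarrow> bool" for k where
  Sigma0: "Well_order \<beta> \<Longrightarrow> \<beta> = {} \<Longrightarrow> clopen k A \<Longrightarrow> Sigma_set k \<beta> A"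
| SigmaA: "Well_order \<beta> \<Longrightarrow> \<beta> \<noteq> {} \<Longrightarrow>
     (\<forall>s. P s \<subseteq> space k \<and> (\<exists>\<gamma>. (\<gamma>, \<beta>) \<in> ordLess \<and> Sigma_set k \<gamma> (space k - P s))) \<Longrightarrow>
     Sigma_set k \<beta> (suslinA P)"

definition Pi_set :: "nat \<Rightarrow> nat rel \<Rightarrow> (nat \<Rightarrow> nat) list set \<Rightarrow> bool" where
  "Pi_set k \<beta> A \<longleftrightarrow> A \<subseteq> space k \<and> Sigma_set k \<beta> (space k - A)"

definition suslin_set :: "nat \<Rightarrow> (nat \<Rightarrow> nat) list set \<Rightarrow> bool" where
  "suslin_set k A \<longleftrightarrow> (\<exists>\<beta>::nat rel. Well_order \<beta> \<and> Sigma_set k \<beta> A)"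

end

theory Submission
  imports Defs "HOL-Library.Countable"
begin

text \<open>By well-founded induction on \<open>\<xi>\<close> in the field of \<open>\<alpha>\<close>, the set of \<open>fs\<close> for which
  \<open>(e, as, fs, b)\<close> has a computation of rank at most \<open>|\<xi>|\<close> is Suslin, uniformly in \<open>e, as, b\<close>.
  It arises from the corresponding sets for \<open>\<eta> < \<xi>\<close> by one application of the schemes:
  Boolean operations and countable quantifiers, a permutation of coordinates (S6), a clopen
  condition (S7), and for S8 the operation A, because computations are single-valued and
  \<open>S(g) = 1\<close> says that some branch \<open>f\<close> keeps \<open>g\<close> positive on all its initial segments.
  Suslin sets are closed under all of these since countably many countable well-orders have
  a common countable strict upper bound. Finally \<open>\<parallel>x\<parallel> < \<alpha>\<close> is a countable union over \<open>\<xi>\<close>.\<close>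

section \<open>Countable well-orders\<close>

lemma Well_order_refl: "Well_order r \<Longrightarrow> x \<in> Field r \<Longrightarrow> (x, x) \<in> r"
  using wo_rel.REFL[OF wo_rel.intro] unfolding refl_on_def by blast

lemma Well_order_trans: "Well_order r \<Longrightarrow> (x, y) \<in> r \<Longrightarrow> (y, z) \<in> r \<Longrightarrow> (x, z) \<in> r"
  using wo_rel.TRANS[OF wo_rel.intro] unfolding trans_def by blast

lemma Well_order_antisym: "Well_order r \<Longrightarrow> (x, y) \<in> r \<Longrightarrow> (y, x) \<in> r \<Longrightarrow> x = y"
  using wo_rel.ANTISYM[OF wo_rel.intro] unfolding antisym_def by blast

lemma Well_order_total:
  "Well_order r \<Longrightarrow> x \<in> Field r \<Longrightarrow> y \<in> Field r \<Longrightarrow> (x, y) \<in> r \<or> (y, x) \<in> r"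
  using wo_rel.TOTALS[OF wo_rel.intro] by blast

lemma Well_order_wf: "Well_order r \<Longrightarrow> wf (r - Id)"
  using wo_rel.WF[OF wo_rel.intro] by blast

lemma Well_order_singleton: "Well_order {(a, a)}"
proof -
  have "Field {(a, a)} = {a}" unfolding Field_def by auto
  then show ?thesis unfolding well_order_on_def by simp
qed

lemma Well_order_inflationary:
  assumes W: "Well_order r"
    and into: "\<And>x. x \<in> Field r \<Longrightarrow> h x \<in> Field r"
    and strict_mono: "\<And>x y. (x, y) \<in> r \<Longrightarrow> x \<noteq> y \<Longrightarrow> (h x, h y) \<in> r \<and> h x \<noteq> h y"
  shows "x \<in> Field r \<Longrightarrow> (x, h x) \<in> r"
proof (induction x rule: wf_induct_rule[OF Well_order_wf[OF W], case_names less])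
  case (less x)
  show ?case
  proof (rule ccontr)
    assume "(x, h x) \<notin> r"
    moreover have hx: "h x \<in> Field r" using into less by blast
    ultimately have below: "(h x, x) \<in> r" "h x \<noteq> x"
      using Well_order_total[OF W less(2) hx] Well_order_refl[OF W less(2)] by metis+
    then have "(h x, h (h x)) \<in> r" using less(1) hx by blast
    moreover have "(h (h x), h x) \<in> r" "h (h x) \<noteq> h x" using strict_mono[OF below] by auto
    ultimately show False using Well_order_antisym[OF W] by blast
  qed
qed

text \<open>Block indices are ordered \<open>1 < 2 < 3 < \<dots> < 0\<close>: block \<open>0\<close> comes last, so it
  lies above all other blocks.\<close>
definition index_order :: "nat rel" where
  "index_order = {(i, j). (j = 0 \<and> i \<noteq> 0) \<or> (0 < i \<and> i < j)}"

lemma wf_index_order: "wf index_order"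
proof (rule wf_subset)
  show "wf (inv_image (less_than <*lex*> less_than) (\<lambda>i. (if i = 0 then 1 else 0 :: nat, i)))"
    by (intro wf_inv_image wf_lex_prod wf_less_than)
  show "index_order \<subseteq> inv_image (less_than <*lex*> less_than) (\<lambda>i. (if i = 0 then 1 else 0, i))"
    unfolding index_order_def by auto
qed

definition block_sum :: "(nat \<Rightarrow> 'a rel) \<Rightarrow> (nat \<times> 'a) rel" where
  "block_sum C = {((i, x), (j, y)). x \<in> Field (C i) \<and> y \<in> Field (C j) \<and>
     ((i, j) \<in> index_order \<or> i = j \<and> (x, y) \<in> C i)}"

lemma mem_block_sum:
  "((i, x), (j, y)) \<in> block_sum C \<longleftrightarrow> x \<in> Field (C i) \<and> y \<in> Field (C j) \<and>
     ((i, j) \<in> index_order \<or> i = j \<and> (x, y) \<in> C i)"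
  unfolding block_sum_def by simp

lemma Field_block_sum:
  assumes W: "\<And>i. Well_order (C i)"
  shows "Field (block_sum C) = {(i, x). x \<in> Field (C i)}"
proof
  show "{(i, x). x \<in> Field (C i)} \<subseteq> Field (block_sum C)"
  proof clarify
    fix i x assume "x \<in> Field (C i)"
    then have "((i, x), (i, x)) \<in> block_sum C" by (simp add: mem_block_sum Well_order_refl[OF W])
    then show "(i, x) \<in> Field (block_sum C)" by (rule FieldI1)
  qed
  show "Field (block_sum C) \<subseteq> {(i, x). x \<in> Field (C i)}"
    unfolding Field_def block_sum_def by auto
qed

lemma Well_order_block_sum:
  assumes W: "\<And>i. Well_order (C i)"
  shows "Well_order (block_sum C)"
proof -
  have F: "Field (block_sum C) = {(i, x). x \<in> Field (C i)}" by (rule Field_block_sum[OF W])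
  have "refl_on (Field (block_sum C)) (block_sum C)"
    unfolding refl_on_def F by (auto simp: mem_block_sum Well_order_refl[OF W] intro: FieldI1 FieldI2)
  moreover have "trans (block_sum C)"
    unfolding trans_def block_sum_def index_order_def using Well_order_trans[OF W] by auto
  moreover have "antisym (block_sum C)"
    unfolding antisym_def block_sum_def index_order_def using Well_order_antisym[OF W] by auto
  moreover have "total_on (Field (block_sum C)) (block_sum C)"
    unfolding total_on_def F
  proof (intro ballI impI)
    fix p q assume "p \<in> {(i, x). x \<in> Field (C i)}" "q \<in> {(i, x). x \<in> Field (C i)}" "p \<noteq> q"
    then show "(p, q) \<in> block_sum C \<or> (q, p) \<in> block_sum C"
      using Well_order_total[OF W]
      by (cases p, cases q, cases "fst p = fst q") (auto simp: mem_block_sum index_order_def)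
  qed
  moreover have "wf (block_sum C - Id)"
  proof -
    let ?R = "inv_image index_order fst"
    let ?S = "same_fst (\<lambda>_. True) (\<lambda>i. C i - Id)"
    have "wf ?R" by (intro wf_inv_image wf_index_order)
    moreover have "wf ?S" by (rule wf_same_fst) (use Well_order_wf[OF W] in blast)
    moreover have "?R O ?S \<subseteq> ?R" unfolding same_fst_def by auto
    ultimately have "wf (?R \<union> ?S)" by (rule wf_union_compatible)
    moreover have "block_sum C - Id \<subseteq> ?R \<union> ?S"
      unfolding block_sum_def same_fst_def by auto
    ultimately show ?thesis by (rule wf_subset)
  qed
  moreover have "block_sum C \<subseteq> Field (block_sum C) \<times> Field (block_sum C)"
    by (auto intro: FieldI1 FieldI2)
  ultimately show ?thesis
    unfolding well_order_on_def linear_order_on_def partial_order_on_def preorder_on_def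
    by blast
qed

text \<open>Composing an embedding \<open>f\<close> of the sum into \<open>C i\<close> with the inclusion of block \<open>i\<close>
  gives a strictly monotone self-map \<open>h\<close> of \<open>C i\<close>, so \<open>p \<le> h p\<close> for \<open>p = f (0, c)\<close>;
  but \<open>(i, p)\<close> lies below the top block, so \<open>h p < p\<close>.\<close>
lemma block_ordLess_block_sum:
  assumes W: "\<And>i. Well_order (C i)" and top: "c \<in> Field (C 0)" and "i \<noteq> 0"
  shows "(C i, block_sum C) \<in> ordLess"
proof (rule ccontr)
  let ?W = "block_sum C"
  have WW: "Well_order ?W" by (rule Well_order_block_sum[OF W])
  assume "(C i, ?W) \<notin> ordLess"
  then have "(?W, C i) \<in> ordLeq" using not_ordLess_iff_ordLeq[OF WW W] by blast
  then obtain f where emb: "embed ?W (C i) f" unfolding ordLeq_def by blast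
  have compat: "compat ?W (C i) f" by (rule embed_compat[OF emb])
  have inj: "inj_on f (Field ?W)" by (rule embed_inj_on[OF WW emb])
  have F: "Field ?W = {(i, x). x \<in> Field (C i)}" by (rule Field_block_sum[OF W])
  define h where "h x = f (i, x)" for x
  have inF: "(i, x) \<in> Field ?W" if "x \<in> Field (C i)" for x using that F by simp
  have into: "h x \<in> Field (C i)" if "x \<in> Field (C i)" for x
    unfolding h_def by (rule embed_in_Field[OF emb inF[OF that]])
  have strict_mono: "(h x, h y) \<in> C i \<and> h x \<noteq> h y" if "(x, y) \<in> C i" "x \<noteq> y" for x y
  proof -
    have xy: "x \<in> Field (C i)" "y \<in> Field (C i)" using that by (auto intro: FieldI1 FieldI2)
    then have "((i, x), (i, y)) \<in> ?W" using that by (simp add: mem_block_sum)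
    then have "(h x, h y) \<in> C i" using compat unfolding compat_def h_def by blast
    moreover have "h x \<noteq> h y"
      using inj inF[OF xy(1)] inF[OF xy(2)] that(2) unfolding h_def inj_on_def by blast
    ultimately show ?thesis by blast
  qed
  have topF: "(0, c) \<in> Field ?W" using F top by simp
  define p where "p = f (0, c)"
  have pF: "p \<in> Field (C i)" unfolding p_def by (rule embed_in_Field[OF emb topF])
  have "(p, h p) \<in> C i" by (rule Well_order_inflationary[OF W into strict_mono pF])
  moreover have "((i, p), (0, c)) \<in> ?W"
    using pF top \<open>i \<noteq> 0\<close> by (simp add: mem_block_sum index_order_def)
  then have "(h p, p) \<in> C i" using compat unfolding compat_def h_def p_def by blast
  moreover have "h p \<noteq> p" using inj inF[OF pF] topF \<open>i \<noteq> 0\<close> unfolding h_def p_def inj_on_def by blast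
  ultimately show False using Well_order_antisym[OF W] by blast
qed

lemma countable_ordLess_bound:
  fixes B :: "nat \<Rightarrow> nat rel"
  assumes B: "\<And>i. Well_order (B i)"
  shows "\<exists>\<beta> :: nat rel. Well_order \<beta> \<and> \<beta> \<noteq> {} \<and> (\<forall>i. (B i, \<beta>) \<in> ordLess)"
proof -
  define C where "C i = (if i = 0 then {(0, 0)} else B (i - 1))" for i
  have WC: "Well_order (C i)" for i unfolding C_def using B Well_order_singleton by auto
  have top: "0 \<in> Field (C 0)" unfolding C_def Field_def by auto
  let ?W = "block_sum C"
  have WW: "Well_order ?W" by (rule Well_order_block_sum[OF WC])
  have "(B i, ?W) \<in> ordLess" for i
    using block_ordLess_block_sum[of C, OF WC top, of "Suc i"] by (simp add: C_def)
  define \<beta> where "\<beta> = dir_image ?W prod_encode"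
  have "Well_order \<beta>" unfolding \<beta>_def by (rule Well_order_dir_image[OF WW inj_prod_encode])
  moreover have "(?W, \<beta>) \<in> ordIso" unfolding \<beta>_def by (rule dir_image_ordIso[OF WW inj_prod_encode])
  then have "(B i, \<beta>) \<in> ordLess" for i using \<open>(B i, ?W) \<in> ordLess\<close> ordLess_ordIso_trans by blast
  moreover have "((0, 0), (0, 0)) \<in> ?W" using top Well_order_refl[OF WC] by (simp add: mem_block_sum)
  then have "\<beta> \<noteq> {}" unfolding \<beta>_def dir_image_def by blast
  ultimately show ?thesis by blast
qed

section \<open>Closure properties of Suslin sets\<close>

lemma Sigma_set_subset_space: "Sigma_set k \<beta> A \<Longrightarrow> A \<subseteq> space k"
proof (induction rule: Sigma_set.induct)
  case (Sigma0 \<beta> A)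
  then show ?case unfolding clopen_def baire_open_def by blast
next
  case (SigmaA \<beta> P)
  have "suslinA P \<subseteq> P []"
  proof
    fix x assume "x \<in> suslinA P"
    then obtain f where "\<forall>n. x \<in> P (map f [0..<n])" unfolding suslinA_def by blast
    then show "x \<in> P []" by (metis list.simps(8) upt_0)
  qed
  then show ?case using SigmaA(3) by blast
qed

lemma suslin_set_subset_space: "suslin_set k A \<Longrightarrow> A \<subseteq> space k"
  unfolding suslin_set_def using Sigma_set_subset_space by blast

lemma clopen_suslin_set:
  assumes "clopen k A"
  shows "suslin_set k A"
proof -
  have "Well_order ({} :: nat rel)" by simp
  then show ?thesis unfolding suslin_set_def using Sigma_set.Sigma0 assms by blast
qed

lemma suslin_set_space: "suslin_set k (space k)"
  by (rule clopen_suslin_set) (auto simp: clopen_def baire_open_def)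

lemma suslin_set_empty: "suslin_set k {}"
  by (rule clopen_suslin_set) (auto simp: clopen_def baire_open_def)

text \<open>This is where the countable ordinals enter: the ranks of the countably many
  complements \<open>space k - P s\<close> have a common countable strict upper bound.\<close>
lemma suslin_set_suslinA_of_compl:
  assumes "\<And>s. P s \<subseteq> space k" and "\<And>s. suslin_set k (space k - P s)"
  shows "suslin_set k (suslinA P)"
proof -
  obtain G where G: "\<And>s. Well_order (G s) \<and> Sigma_set k (G s) (space k - P s)"
    using assms(2) unfolding suslin_set_def by metis
  obtain \<beta> :: "nat rel" where \<beta>: "Well_order \<beta>" "\<beta> \<noteq> {}" "\<forall>i. (G (list_decode i), \<beta>) \<in> ordLess"
    using countable_ordLess_bound[of "\<lambda>i. G (list_decode i)"] G by blast
  have "(G s, \<beta>) \<in> ordLess" for s using \<beta>(3) by (metis list_encode_inverse)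
  then have "Sigma_set k \<beta> (suslinA P)"
    using assms(1) G by (intro Sigma_set.SigmaA[OF \<beta>(1,2)]) blast
  then show ?thesis unfolding suslin_set_def using \<beta>(1) by blast
qed

lemma suslin_set_compl: "suslin_set k A \<Longrightarrow> suslin_set k (space k - A)"
proof -
  assume A: "suslin_set k A"
  then have "A \<subseteq> space k" by (rule suslin_set_subset_space)
  then have "suslin_set k (suslinA (\<lambda>_. space k - A))"
    using A by (intro suslin_set_suslinA_of_compl) (auto simp: double_diff)
  then show ?thesis unfolding suslinA_def by simp
qed

lemma suslin_set_suslinA: "(\<And>s. suslin_set k (P s)) \<Longrightarrow> suslin_set k (suslinA P)"
  by (intro suslin_set_suslinA_of_compl suslin_set_subset_space suslin_set_compl)

lemma suslin_set_INT: "(\<And>i::nat. suslin_set k (A i)) \<Longrightarrow> suslin_set k (\<Inter>i. A i)"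
proof -
  assume "\<And>i. suslin_set k (A i)"
  then have "suslin_set k (suslinA (\<lambda>s. A (length s)))" by (rule suslin_set_suslinA)
  moreover have "suslinA (\<lambda>s. A (length s)) = (\<Inter>i. A i)" unfolding suslinA_def by auto
  ultimately show ?thesis by simp
qed

lemma suslin_set_UN: "(\<And>i::nat. suslin_set k (A i)) \<Longrightarrow> suslin_set k (\<Union>i. A i)"
proof -
  assume A: "\<And>i. suslin_set k (A i)"
  then have "suslin_set k (space k - (\<Inter>i. space k - A i))"
    by (intro suslin_set_compl suslin_set_INT)
  moreover have "space k - (\<Inter>i. space k - A i) = (\<Union>i. A i)"
    using suslin_set_subset_space[OF A] by blast
  ultimately show ?thesis by simp
qed

locale coordinate_reindexing =
  fixes k :: nat and h :: "(nat \<Rightarrow> nat) list \<Rightarrow> (nat \<Rightarrow> nat) list" and \<pi> :: "nat \<Rightarrow> nat"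
  assumes h_space: "fs \<in> space k \<Longrightarrow> h fs \<in> space k"
    and h_nth: "fs \<in> space k \<Longrightarrow> t < k \<Longrightarrow> h fs ! t = fs ! \<pi> t"
    and \<pi>_less: "t < k \<Longrightarrow> \<pi> t < k"
begin

lemma baire_open_preimage:
  assumes A: "baire_open k A"
  shows "baire_open k {fs \<in> space k. h fs \<in> A}"
  unfolding baire_open_def
proof (intro conjI ballI)
  show "{fs \<in> space k. h fs \<in> A} \<subseteq> space k" by blast
  fix fs assume fs: "fs \<in> {fs \<in> space k. h fs \<in> A}"
  then obtain n where n: "\<forall>gs \<in> space k. (\<forall>t<k. \<forall>m<n. (gs ! t) m = (h fs ! t) m) \<longrightarrow> gs \<in> A"
    using A unfolding baire_open_def by blast
  show "\<exists>n. \<forall>gs \<in> space k. (\<forall>t<k. \<forall>m<n. (gs ! t) m = (fs ! t) m) \<longrightarrow> gs \<in> {fs \<in> space k. h fs \<in> A}"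
  proof (intro exI ballI impI)
    fix gs assume gs: "gs \<in> space k" "\<forall>t<k. \<forall>m<n. (gs ! t) m = (fs ! t) m"
    then have "\<forall>t<k. \<forall>m<n. (h gs ! t) m = (h fs ! t) m"
      using fs by (simp add: h_nth \<pi>_less)
    then show "gs \<in> {fs \<in> space k. h fs \<in> A}" using n gs(1) h_space by blast
  qed
qed

lemma Sigma_set_preimage: "Sigma_set k \<beta> A \<Longrightarrow> Sigma_set k \<beta> {fs \<in> space k. h fs \<in> A}"
proof (induction rule: Sigma_set.induct)
  case (Sigma0 \<beta> A)
  have "space k - {fs \<in> space k. h fs \<in> A} = {fs \<in> space k. h fs \<in> space k - A}"
    using h_space by blast
  moreover have "baire_open k {fs \<in> space k. h fs \<in> A}"
    and "baire_open k {fs \<in> space k. h fs \<in> space k - A}"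
    using Sigma0(3) baire_open_preimage unfolding clopen_def by blast+
  ultimately have "clopen k {fs \<in> space k. h fs \<in> A}" unfolding clopen_def by simp
  then show ?case by (rule Sigma_set.Sigma0[OF Sigma0(1,2)])
next
  case (SigmaA \<beta> P)
  have eq: "{fs \<in> space k. h fs \<in> suslinA P} = suslinA (\<lambda>s. {fs \<in> space k. h fs \<in> P s})"
    unfolding suslinA_def by auto
  have "\<forall>s. {fs \<in> space k. h fs \<in> P s} \<subseteq> space k \<and>
      (\<exists>\<gamma>. (\<gamma>, \<beta>) \<in> ordLess \<and> Sigma_set k \<gamma> (space k - {fs \<in> space k. h fs \<in> P s}))"
  proof
    fix s
    have "space k - {fs \<in> space k. h fs \<in> P s} = {fs \<in> space k. h fs \<in> space k - P s}"
      using h_space by blast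
    then show "{fs \<in> space k. h fs \<in> P s} \<subseteq> space k \<and>
      (\<exists>\<gamma>. (\<gamma>, \<beta>) \<in> ordLess \<and> Sigma_set k \<gamma> (space k - {fs \<in> space k. h fs \<in> P s}))"
      using SigmaA(3) by auto
  qed
  then show ?case unfolding eq by (rule Sigma_set.SigmaA[OF SigmaA(1,2)])
qed

end

lemma coordinate_reindexing_swap_list:
  assumes "i < k" "j < k"
  shows "coordinate_reindexing k (swap_list i j) (\<lambda>t. if t = j then i else if t = i then j else t)"
  using assms by unfold_locales (auto simp: space_def swap_list_def nth_list_update)

definition suslin_pred :: "nat \<Rightarrow> ((nat \<Rightarrow> nat) list \<Rightarrow> bool) \<Rightarrow> bool" where
  "suslin_pred k \<Phi> \<longleftrightarrow> suslin_set k {fs \<in> space k. \<Phi> fs}"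

lemma suslin_pred_cong:
  "(\<And>fs. fs \<in> space k \<Longrightarrow> \<Phi> fs = \<Psi> fs) \<Longrightarrow> suslin_pred k \<Psi> \<Longrightarrow> suslin_pred k \<Phi>"
  unfolding suslin_pred_def by (metis (mono_tags, lifting) Collect_cong)

lemma suslin_pred_const: "suslin_pred k (\<lambda>_. C)"
  unfolding suslin_pred_def by (cases C) (simp_all add: suslin_set_space suslin_set_empty)

lemma suslin_pred_const_conj: "(C \<Longrightarrow> suslin_pred k \<Phi>) \<Longrightarrow> suslin_pred k (\<lambda>fs. C \<and> \<Phi> fs)"
  by (cases C) (simp_all add: suslin_pred_const)

lemma suslin_pred_not: "suslin_pred k \<Phi> \<Longrightarrow> suslin_pred k (\<lambda>fs. \<not> \<Phi> fs)"
proof -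
  assume "suslin_pred k \<Phi>"
  then have "suslin_set k (space k - {fs \<in> space k. \<Phi> fs})"
    unfolding suslin_pred_def by (rule suslin_set_compl)
  moreover have "space k - {fs \<in> space k. \<Phi> fs} = {fs \<in> space k. \<not> \<Phi> fs}" by blast
  ultimately show ?thesis unfolding suslin_pred_def by simp
qed

lemma suslin_pred_ex:
  assumes "\<And>x :: 'a :: countable. suslin_pred k (\<Phi> x)"
  shows "suslin_pred k (\<lambda>fs. \<exists>x. \<Phi> x fs)"
proof -
  have "suslin_set k (\<Union>n. {fs \<in> space k. \<Phi> (from_nat n) fs})"
    using assms unfolding suslin_pred_def by (rule suslin_set_UN)
  moreover have "(\<Union>n. {fs \<in> space k. \<Phi> (from_nat n) fs}) = {fs \<in> space k. \<exists>x. \<Phi> x fs}"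
    by auto (metis from_nat_to_nat)
  ultimately show ?thesis unfolding suslin_pred_def by simp
qed

lemma suslin_pred_all:
  assumes "\<And>x :: 'a :: countable. suslin_pred k (\<Phi> x)"
  shows "suslin_pred k (\<lambda>fs. \<forall>x. \<Phi> x fs)"
  using suslin_pred_not[OF suslin_pred_ex[OF suslin_pred_not[OF assms]]] by simp

lemma suslin_pred_or:
  assumes "suslin_pred k \<Phi>" and "suslin_pred k \<Psi>"
  shows "suslin_pred k (\<lambda>fs. \<Phi> fs \<or> \<Psi> fs)"
proof -
  have "suslin_pred k (\<lambda>fs. \<exists>b. if b then \<Phi> fs else \<Psi> fs)"
  proof (rule suslin_pred_ex)
    show "suslin_pred k (\<lambda>fs. if b then \<Phi> fs else \<Psi> fs)" for b
      by (cases b) (simp_all add: assms)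
  qed
  then show ?thesis by (simp add: ex_bool_eq)
qed

lemma suslin_pred_and:
  assumes "suslin_pred k \<Phi>" and "suslin_pred k \<Psi>"
  shows "suslin_pred k (\<lambda>fs. \<Phi> fs \<and> \<Psi> fs)"
  using suslin_pred_not[OF suslin_pred_or[OF suslin_pred_not[OF assms(1)] suslin_pred_not[OF assms(2)]]]
  by simp

lemma suslin_pred_suslinA:
  fixes \<Phi> :: "nat list \<Rightarrow> (nat \<Rightarrow> nat) list \<Rightarrow> bool"
  assumes "\<And>s. suslin_pred k (\<Phi> s)"
  shows "suslin_pred k (\<lambda>fs. \<exists>f. \<forall>n. \<Phi> (map f [0..<n]) fs)"
proof -
  have "suslin_set k (suslinA (\<lambda>s. {fs \<in> space k. \<Phi> s fs}))"
    using assms unfolding suslin_pred_def by (rule suslin_set_suslinA)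
  moreover have "suslinA (\<lambda>s. {fs \<in> space k. \<Phi> s fs}) =
      {fs \<in> space k. \<exists>f. \<forall>n. \<Phi> (map f [0..<n]) fs}"
    unfolding suslinA_def by auto
  ultimately show ?thesis unfolding suslin_pred_def by simp
qed

lemma suslin_pred_swap_list:
  assumes "i < k" "j < k" and "suslin_pred k \<Phi>"
  shows "suslin_pred k (\<lambda>fs. \<Phi> (swap_list i j fs))"
proof -
  interpret coordinate_reindexing k "swap_list i j" "\<lambda>t. if t = j then i else if t = i then j else t"
    using assms(1,2) by (rule coordinate_reindexing_swap_list)
  obtain \<beta> where \<beta>: "Well_order \<beta>" "Sigma_set k \<beta> {fs \<in> space k. \<Phi> fs}"
    using assms(3) unfolding suslin_pred_def suslin_set_def by blast
  from \<beta>(2) have "Sigma_set k \<beta> {fs \<in> space k. swap_list i j fs \<in> {fs \<in> space k. \<Phi> fs}}"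
    by (rule Sigma_set_preimage)
  moreover have "{fs \<in> space k. swap_list i j fs \<in> {fs \<in> space k. \<Phi> fs}} =
      {fs \<in> space k. \<Phi> (swap_list i j fs)}"
    using h_space by blast
  ultimately show ?thesis using \<beta>(1) unfolding suslin_pred_def suslin_set_def by auto
qed

lemma suslin_pred_nth_app:
  assumes "0 < k"
  shows "suslin_pred k (\<lambda>fs. Q ((fs ! 0) a))"
proof -
  have baire_open: "baire_open k {fs \<in> space k. R ((fs ! 0) a)}" for R
    unfolding baire_open_def
  proof (intro conjI ballI)
    fix fs assume "fs \<in> {fs \<in> space k. R ((fs ! 0) a)}"
    then show "\<exists>n. \<forall>gs\<in>space k. (\<forall>i<k. \<forall>m<n. (gs ! i) m = (fs ! i) m) \<longrightarrow>
        gs \<in> {fs \<in> space k. R ((fs ! 0) a)}"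
      using assms by (intro exI[of _ "Suc a"]) auto
  qed blast
  have "space k - {fs \<in> space k. Q ((fs ! 0) a)} = {fs \<in> space k. \<not> Q ((fs ! 0) a)}"
    by blast
  then have "clopen k {fs \<in> space k. Q ((fs ! 0) a)}"
    unfolding clopen_def by (simp only:) (intro conjI baire_open)
  then show ?thesis unfolding suslin_pred_def by (rule clopen_suslin_set)
qed

section \<open>Computations relative to S\<close>

text \<open>Distinct schemes have distinct codes, since \<open>list_encode\<close> is injective; so both steps
  use the same scheme, and their results agree once the subcomputations do.\<close>
lemma step_functional:
  assumes "step P (e, as, fs, b)" and "step Q (e, as, fs, b')"
    and "\<And>e as fs c c'. P (e, as, fs, c) \<Longrightarrow> Q (e, as, fs, c') \<Longrightarrow> c = c'"
  shows "b = b'"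
  using assms(1)
  unfolding step_def Let_def prod.case
  apply (elim disjE exE conjE)
  apply (insert assms(2))
  apply (simp_all add: step_def list_encode_eq del: list_encode.simps)
  apply (metis assms(3) ext)+
  done

lemma omegaS_functional: "omegaS (e, as, fs, b) \<Longrightarrow> omegaS (e, as, fs, b') \<Longrightarrow> b = b'"
proof (induction "(e, as, fs, b)" arbitrary: e as fs b b' rule: omegaS.induct)
  case 1
  from 1(2) have "step omegaS (e, as, fs, b')" by (cases rule: omegaS.cases)
  with 1(1) show ?case by (rule step_functional) auto
qed

lemma comp_rank_le_imp_omegaS: "comp_rank_le \<alpha> \<xi> x \<Longrightarrow> omegaS x"
proof (induction rule: comp_rank_le.induct)
  case (1 \<xi> x)
  have "step omegaS x" using step_mono[rule_format, OF _ 1(2), of omegaS] by blast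
  then show ?case by (rule omegaS.intros)
qed

text \<open>As computations are single-valued, \<open>S(\<lambda>t. {e1}(t, as, fs)) = 1\<close> iff some \<open>f\<close> makes
  all values at the codes of its initial segments positive: an operation-A condition on \<open>fs\<close>.\<close>
lemma suslin_pred_S8:
  assumes Q_suslin: "\<And>e as b. suslin_pred k (\<lambda>fs. Q (e, as, fs, b))"
    and Q_functional: "\<And>e as fs c c'. Q (e, as, fs, c) \<Longrightarrow> Q (e, as, fs, c') \<Longrightarrow> c = c'"
  shows "suslin_pred k (\<lambda>fs. \<exists>g. (\<forall>t. Q (e1, t # as, fs, g t)) \<and> b = Sfun g)"
proof -
  define total where "total fs \<longleftrightarrow> (\<forall>t. \<exists>c. Q (e1, t # as, fs, c))" for fs
  define branch where
    "branch fs \<longleftrightarrow> (\<exists>f. \<forall>n. \<exists>c. 0 < c \<and> Q (e1, seqcode f n # as, fs, c))" for fs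
  have Sfun_eq: "Sfun g = (if branch fs then 1 else 0)" if g: "\<forall>t. Q (e1, t # as, fs, g t)" for g fs
  proof -
    have "g t = 0 \<longleftrightarrow> (\<forall>c. Q (e1, t # as, fs, c) \<longrightarrow> c = 0)" for t
      using g Q_functional by metis
    then show ?thesis unfolding Sfun_def branch_def by auto blast+
  qed
  have "(\<exists>g. (\<forall>t. Q (e1, t # as, fs, g t)) \<and> b = Sfun g) \<longleftrightarrow>
      total fs \<and> (b = 1 \<and> branch fs \<or> b = 0 \<and> \<not> branch fs)" for fs
  proof
    assume "\<exists>g. (\<forall>t. Q (e1, t # as, fs, g t)) \<and> b = Sfun g"
    then obtain g where "\<forall>t. Q (e1, t # as, fs, g t)" "b = Sfun g" by blast
    then show "total fs \<and> (b = 1 \<and> branch fs \<or> b = 0 \<and> \<not> branch fs)"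
      unfolding total_def using Sfun_eq by auto
  next
    assume *: "total fs \<and> (b = 1 \<and> branch fs \<or> b = 0 \<and> \<not> branch fs)"
    then obtain g where "\<forall>t. Q (e1, t # as, fs, g t)" unfolding total_def by metis
    then show "\<exists>g. (\<forall>t. Q (e1, t # as, fs, g t)) \<and> b = Sfun g" using * Sfun_eq by auto
  qed
  moreover have "suslin_pred k total"
    unfolding total_def by (intro suslin_pred_all suslin_pred_ex Q_suslin)
  moreover have "suslin_pred k branch"
    unfolding branch_def seqcode_def
    by (rule suslin_pred_suslinA[where
          \<Phi> = "\<lambda>s fs. \<exists>c. 0 < c \<and> Q (e1, list_encode s # as, fs, c)"])
      (intro suslin_pred_ex suslin_pred_const_conj Q_suslin)
  ultimately show ?thesis
    by (simp only:)
      (intro suslin_pred_and suslin_pred_or suslin_pred_const_conj suslin_pred_not suslin_pred_const)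
qed

text \<open>The arity \<open>length fs\<close> occurring in \<open>step\<close> is the constant \<open>k\<close> on \<open>space k\<close>.\<close>
lemma suslin_pred_Let_length:
  "suslin_pred k (\<lambda>fs. F k fs) \<Longrightarrow> suslin_pred k (\<lambda>fs. let k' = length fs in F k' fs)"
  by (rule suslin_pred_cong) (simp_all add: space_def)

lemma suslin_pred_step:
  assumes Q_suslin: "\<And>e as b. suslin_pred k (\<lambda>fs. Q (e, as, fs, b))"
    and Q_functional: "\<And>e as fs c c'. Q (e, as, fs, c) \<Longrightarrow> Q (e, as, fs, c') \<Longrightarrow> c = c'"
  shows "suslin_pred k (\<lambda>fs. step Q (e, as, fs, b))"
  unfolding step_def prod.case Let_def[of "length as"]
proof (rule suslin_pred_Let_length,
    intro suslin_pred_or suslin_pred_ex suslin_pred_const_conj suslin_pred_and Q_suslin suslin_pred_const)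
  fix i j e1 assume "i < k" "j < k"
  then show "suslin_pred k (\<lambda>fs. Q (e1, as, swap_list i j fs, b))"
    by (rule suslin_pred_swap_list[where \<Phi> = "\<lambda>fs. Q (e1, as, fs, b)"]) (rule Q_suslin)
next
  assume "1 \<le> k"
  then show "suslin_pred k (\<lambda>fs. b = (fs ! 0) (as ! 0))"
    using suslin_pred_nth_app[of k "\<lambda>v. b = v" "as ! 0"] by simp
next
  fix e1
  show "suslin_pred k (\<lambda>fs. \<exists>g. e = list_encode [8, length as, k, e1] \<and>
      (\<forall>t. Q (e1, t # as, fs, g t)) \<and> b = Sfun g)"
    by (simp only: ex_simps) (intro suslin_pred_const_conj suslin_pred_S8[OF Q_suslin Q_functional])
qed

lemma suslin_pred_comp_rank_le:
  assumes "Well_order \<alpha>"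
  shows "suslin_pred k (\<lambda>fs. comp_rank_le \<alpha> \<xi> (e, as, fs, b))"
proof (induction \<xi> arbitrary: e as b
    rule: wf_induct_rule[OF Well_order_wf[OF assms], case_names less])
  case (less \<xi>)
  define Q where "Q y \<longleftrightarrow> (\<exists>\<eta>. (\<eta>, \<xi>) \<in> \<alpha> \<and> \<eta> \<noteq> \<xi> \<and> comp_rank_le \<alpha> \<eta> y)" for y
  have "suslin_pred k (\<lambda>fs. Q (e, as, fs, b))" for e as b
    unfolding Q_def using less by (intro suslin_pred_ex suslin_pred_const_conj) simp
  moreover have "c = c'" if "Q (e, as, fs, c)" "Q (e, as, fs, c')" for e as fs c c'
    using that unfolding Q_def by (metis comp_rank_le_imp_omegaS omegaS_functional)
  ultimately have "suslin_pred k (\<lambda>fs. \<xi> \<in> Field \<alpha> \<and> step Q (e, as, fs, b))"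
    by (intro suslin_pred_const_conj suslin_pred_step)
  then show ?case unfolding Q_def by (subst comp_rank_le.simps) simp
qed

theorem theorem3p2:
  fixes \<alpha> :: "nat rel" and e k b :: nat and as :: "nat list"
  assumes "Well_order \<alpha>"
  shows "suslin_set k {fs \<in> space k. norm_less \<alpha> (e, as, fs, b)}"
proof -
  have "norm_less \<alpha> x \<longleftrightarrow> (\<exists>\<xi>. \<xi> \<in> Field \<alpha> \<and> comp_rank_le \<alpha> \<xi> x)" for x
    unfolding norm_less_def using comp_rank_le_imp_omegaS by blast
  moreover have "suslin_pred k (\<lambda>fs. \<exists>\<xi>. \<xi> \<in> Field \<alpha> \<and> comp_rank_le \<alpha> \<xi> (e, as, fs, b))"
    using suslin_pred_comp_rank_le[OF assms] by (intro suslin_pred_ex suslin_pred_const_conj)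
  ultimately show ?thesis unfolding suslin_pred_def by simp
qed

end
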